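(* Let $(\Omega,\mathcal F,\Pr)$ be a probability space with filtration $\{\mathcal F_n\}_{n\ge0}$, and let $\{z_n\},\{a_n\},\{x_n\},\{y_n\}$ be non-negative adapted sequences with $\mathbb{E}[z_{n+1}\mid\mathcal F_n]\le(1+a_n)z_n+x_n-y_n$ a.s. Suppose $\sum_na_n<\infty$ a.s.; $|z_{n+1}-z_n|\le b_n(z_n+1)$ a.s. for a non-negative adapted sequence $\{b_n\}$ with $\sum_nb_n^2<\infty$ a.s.; and there is a constant $B\ge0$ such that $z_n>B$ implies $x_n-y_n\le -c_n(z_n-B)$, for a non-negative adapted sequence $\{c_n\}$ with $\sum_nc_n=\infty$ a.s. Assume in addition there is a constant $\eta>0$ with (A1) $\liminf_{n\to\infty} nc_n>\frac{\eta}{2}$; (A2) $\sum_n (n+1)^\eta(a_n^2+b_n)<\infty$ a.s. Then $\lim_{n\to\infty} n^{\eta/2} d(z_n,[0,B])=0$ a.s.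
   Context: For $z\in\mathbb R$ and an interval $Z\subset\mathbb R$, $d(z,Z)\doteq\inf_{\tilde z\in Z}|z-\tilde z|$. *)

theory Defs
  imports "HOL-Probability.Probability"
begin

definition dist_set :: "real \<Rightarrow> real set \<Rightarrow> real" where
  "dist_set t Z = infdist t Z"

end

theory Submission
  imports Defs
begin

(* Since z_n - b_n (z_n + 1) is an F_n-measurable lower bound of z_(n+1), it lies below
   E[z_(n+1) | F_n] <= (1 + a_n) z_n + x_n - y_n; with the drift condition this gives, on every
   path, c_n (z_n - B) <= a_n z_n + b_n (z_n + 1) whenever z_n > B. The rest is deterministic.
   By (A2) the series sum_n (n+1)^eta b_n converges, so the increment bound keeps z bounded and
   z_n converges to some L with |z_n - L| <= K sum_(k>=n) b_k. L <= B, since otherwise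
   c_n = O(a_n + b_n) eventually and sum_n c_n would be finite. Finally
   n^(eta/2) sum_(k>=n) b_k <= sum_(k>=n) (k+1)^eta b_k -> 0. *)

lemma summable_increments_tail_bound:
  fixes f :: "nat \<Rightarrow> 'a::banach"
  assumes step: "\<And>n. norm (f (Suc n) - f n) \<le> \<beta> n" and "summable \<beta>"
  shows "\<exists>L. f \<longlonglongrightarrow> L \<and> (\<forall>n. norm (f n - L) \<le> (\<Sum>k. \<beta> (k + n)))"
proof -
  define d where "d n = f (Suc n) - f n" for n
  have "summable d"
    using step \<open>summable \<beta>\<close> by (intro summable_comparison_test[of d \<beta>]) (auto simp: d_def)
  have partial: "f n = f 0 + (\<Sum>k<n. d k)" for n
    by (simp add: d_def sum_lessThan_telescope)
  have "(\<lambda>n. f 0 + (\<Sum>k<n. d k)) \<longlonglongrightarrow> f 0 + suminf d"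
    by (intro tendsto_add tendsto_const summable_LIMSEQ \<open>summable d\<close>)
  then have "f \<longlonglongrightarrow> f 0 + suminf d"
    unfolding partial[symmetric] .
  moreover have "norm (f n - (f 0 + suminf d)) \<le> (\<Sum>k. \<beta> (k + n))" for n
  proof -
    have "norm (f n - (f 0 + suminf d)) = norm (\<Sum>k. d (k + n))"
      by (subst partial[of n]) (simp add: suminf_minus_initial_segment[OF \<open>summable d\<close>] norm_minus_commute)
    also have "\<dots> \<le> (\<Sum>k. \<beta> (k + n))"
      using step \<open>summable \<beta>\<close> by (intro norm_suminf_le summable_ignore_initial_segment) (simp add: d_def)
    finally show ?thesis .
  qed
  ultimately show ?thesis by blast
qed

lemma multiplicative_increments_bounded:
  fixes z b :: "nat \<Rightarrow> real"
  assumes z: "\<And>n. 0 \<le> z n" and b: "\<And>n. 0 \<le> b n"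
    and incr: "\<And>n. \<bar>z (Suc n) - z n\<bar> \<le> b n * (z n + 1)" and "summable b"
  shows "z n + 1 \<le> (z 0 + 1) * exp (suminf b)"
proof -
  have partial: "z n + 1 \<le> (z 0 + 1) * exp (\<Sum>k<n. b k)" for n
  proof (induction n)
    case (Suc n)
    have "z (Suc n) + 1 \<le> (1 + b n) * (z n + 1)"
      using incr[of n] by (simp add: algebra_simps abs_le_iff)
    also have "\<dots> \<le> exp (b n) * ((z 0 + 1) * exp (\<Sum>k<n. b k))"
      using Suc z[of n] b[of n] exp_ge_add_one_self[of "b n"]
      by (intro mult_mono) (auto simp: add.commute)
    also have "\<dots> = (z 0 + 1) * exp (\<Sum>k<Suc n. b k)"
      by (simp add: exp_add mult_ac)
    finally show ?case .
  qed simp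
  have "(\<Sum>k<n. b k) \<le> suminf b"
    using b \<open>summable b\<close> by (intro sum_le_suminf) auto
  then have "(z 0 + 1) * exp (\<Sum>k<n. b k) \<le> (z 0 + 1) * exp (suminf b)"
    using z[of 0] by (intro mult_left_mono) simp_all
  then show ?thesis
    using partial[of n] by linarith
qed

lemma multiplicative_increments_convergent:
  fixes z b :: "nat \<Rightarrow> real"
  assumes z: "\<And>n. 0 \<le> z n" and b: "\<And>n. 0 \<le> b n"
    and incr: "\<And>n. \<bar>z (Suc n) - z n\<bar> \<le> b n * (z n + 1)" and "summable b"
  obtains K L where "z \<longlonglongrightarrow> L" "\<And>n. \<bar>z n - L\<bar> \<le> K * (\<Sum>k. b (k + n))"
proof -
  define K where "K = (z 0 + 1) * exp (suminf b)"
  have "norm (z (Suc n) - z n) \<le> K * b n" for n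
  proof -
    have "b n * (z n + 1) \<le> b n * K"
      using mult_left_mono[OF multiplicative_increments_bounded[OF z b incr \<open>summable b\<close>] b]
      by (simp add: K_def)
    then show ?thesis using incr[of n] by (simp add: mult.commute)
  qed
  then obtain L where "z \<longlonglongrightarrow> L" and "\<And>n. norm (z n - L) \<le> (\<Sum>k. K * b (k + n))"
    using summable_increments_tail_bound[OF _ summable_mult[OF \<open>summable b\<close>]] by blast
  with \<open>summable b\<close> show ?thesis
    by (intro that) (simp_all add: suminf_mult summable_ignore_initial_segment)
qed

lemma drift_limit_le:
  fixes z a b c :: "nat \<Rightarrow> real"
  assumes "z \<longlonglongrightarrow> L" and a: "\<And>n. 0 \<le> a n" and b: "\<And>n. 0 \<le> b n" and c: "\<And>n. 0 \<le> c n"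
    and drift: "\<And>n. z n > B \<Longrightarrow> c n * (z n - B) \<le> a n * z n + b n * (z n + 1)"
    and "summable a" "summable b" "\<not> summable c"
  shows "L \<le> B"
proof (rule ccontr)
  assume "\<not> L \<le> B"
  define \<delta> where "\<delta> = (L - B) / 2"
  have "\<delta> > 0" using \<open>\<not> L \<le> B\<close> by (simp add: \<delta>_def)
  have "eventually (\<lambda>n. B + \<delta> < z n \<and> z n < L + 1) sequentially"
    using \<open>z \<longlonglongrightarrow> L\<close> \<open>\<not> L \<le> B\<close>
    by (intro eventually_conj order_tendstoD) (auto simp: \<delta>_def field_simps)
  then have "eventually (\<lambda>n. norm (c n) \<le> ((L + 2) / \<delta>) * (a n + b n)) sequentially"
  proof (rule eventually_mono)
    fix n assume zn: "B + \<delta> < z n \<and> z n < L + 1"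
    have "c n * \<delta> \<le> c n * (z n - B)" using zn c[of n] by (intro mult_left_mono) auto
    also have "\<dots> \<le> a n * z n + b n * (z n + 1)" using drift[of n] zn \<open>\<delta> > 0\<close> by simp
    also have "\<dots> \<le> a n * (L + 2) + b n * (L + 2)"
      using zn a[of n] b[of n] mult_left_mono[of "z n" "L + 2" "a n"] mult_left_mono[of "z n + 1" "L + 2" "b n"]
      by linarith
    finally show "norm (c n) \<le> ((L + 2) / \<delta>) * (a n + b n)"
      using \<open>\<delta> > 0\<close> c[of n] by (simp add: field_simps)
  qed
  then have "summable c"
    by (rule summable_comparison_test_ev) (intro summable_mult summable_add \<open>summable a\<close> \<open>summable b\<close>)
  then show False using \<open>\<not> summable c\<close> by simp
qed

lemma mono_weight_times_tail_tendsto_zero: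
  fixes w b :: "nat \<Rightarrow> real"
  assumes "mono w" "\<And>n. 0 \<le> w n" "\<And>n. 0 \<le> b n" "summable b" "summable (\<lambda>n. w n * b n)"
  shows "(\<lambda>n. w n * (\<Sum>k. b (k + n))) \<longlonglongrightarrow> 0"
proof (rule Lim_null_comparison[OF always_eventually suminf_exist_split2[OF assms(5)]], intro allI)
  fix n
  have "w n * (\<Sum>k. b (k + n)) = (\<Sum>k. w n * b (k + n))"
    using assms(4) by (intro suminf_mult[symmetric] summable_ignore_initial_segment)
  also have "\<dots> \<le> (\<Sum>k. w (k + n) * b (k + n))"
    using assms by (intro suminf_le summable_mult summable_ignore_initial_segment[where f = "\<lambda>n. w n * b n"]
        summable_ignore_initial_segment mult_right_mono) (auto simp: mono_def)
  finally show "norm (w n * (\<Sum>k. b (k + n))) \<le> (\<Sum>k. w (k + n) * b (k + n))"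
    using assms(2-4) by (simp add: suminf_nonneg summable_ignore_initial_segment)
qed

lemma powr_dist_interval_tendsto_zero:
  fixes z a b c :: "nat \<Rightarrow> real" and B \<eta> :: real
  assumes z: "\<And>n. 0 \<le> z n" and a: "\<And>n. 0 \<le> a n" and b: "\<And>n. 0 \<le> b n" and c: "\<And>n. 0 \<le> c n"
    and incr: "\<And>n. \<bar>z (Suc n) - z n\<bar> \<le> b n * (z n + 1)"
    and drift: "\<And>n. z n > B \<Longrightarrow> c n * (z n - B) \<le> a n * z n + b n * (z n + 1)"
    and "summable a" and weighted_b: "summable (\<lambda>n. (real n + 1) powr \<eta> * b n)"
    and "\<not> summable c" and "\<eta> > 0"
  shows "(\<lambda>n. real n powr (\<eta> / 2) * dist_set (z n) {0..B}) \<longlonglongrightarrow> 0"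
proof -
  define w where "w n = (real n + 1) powr \<eta>" for n
  have "mono w"
    using \<open>\<eta> > 0\<close> by (intro monoI) (simp add: w_def powr_mono2)
  have "1 \<le> w n" for n
    using \<open>\<eta> > 0\<close> by (simp add: w_def ge_one_powr_ge_zero)
  have "summable (\<lambda>n. w n * b n)"
    using weighted_b by (simp add: w_def)
  moreover have "norm (b n) \<le> w n * b n" for n
    using mult_right_mono[OF \<open>1 \<le> w n\<close> b[of n]] b[of n] by simp
  ultimately have "summable b"
    by (intro summable_comparison_test[of b "\<lambda>n. w n * b n"]) auto
  obtain K L where "z \<longlonglongrightarrow> L" and tail: "\<And>n. \<bar>z n - L\<bar> \<le> K * (\<Sum>k. b (k + n))"
    using multiplicative_increments_convergent[OF z b incr \<open>summable b\<close>] by blast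
  have "0 \<le> L"
    using \<open>z \<longlonglongrightarrow> L\<close> z by (intro LIMSEQ_le_const) auto
  moreover have "L \<le> B"
    by (rule drift_limit_le[OF \<open>z \<longlonglongrightarrow> L\<close> a b c drift \<open>summable a\<close> \<open>summable b\<close> \<open>\<not> summable c\<close>])
  ultimately have "L \<in> {0..B}" by simp
  have "\<forall>n. norm (real n powr (\<eta> / 2) * dist_set (z n) {0..B}) \<le> K * (w n * (\<Sum>k. b (k + n)))"
  proof
    fix n
    have "dist_set (z n) {0..B} \<le> \<bar>z n - L\<bar>"
      using infdist_le[OF \<open>L \<in> {0..B}\<close>, of "z n"] by (simp add: dist_set_def dist_real_def)
    then have "dist_set (z n) {0..B} \<le> K * (\<Sum>k. b (k + n))"
      using tail[of n] by linarith
    moreover have "real n powr (\<eta> / 2) \<le> w n"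
      using \<open>\<eta> > 0\<close> powr_mono[of "\<eta> / 2" \<eta> "real n + 1"]
        powr_mono2[of "\<eta> / 2" "real n" "real n + 1"] by (simp add: w_def)
    moreover have "0 \<le> dist_set (z n) {0..B}"
      by (simp add: dist_set_def infdist_nonneg)
    ultimately have "real n powr (\<eta> / 2) * dist_set (z n) {0..B} \<le> w n * (K * (\<Sum>k. b (k + n)))"
      by (intro mult_mono) (auto simp: order.trans[OF zero_le_one \<open>1 \<le> w n\<close>])
    then show "norm (real n powr (\<eta> / 2) * dist_set (z n) {0..B}) \<le> K * (w n * (\<Sum>k. b (k + n)))"
      using \<open>0 \<le> dist_set (z n) {0..B}\<close> by (simp add: mult.left_commute)
  qed
  moreover have "(\<lambda>n. K * (w n * (\<Sum>k. b (k + n)))) \<longlonglongrightarrow> 0"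
    using mono_weight_times_tail_tendsto_zero[OF \<open>mono w\<close> order.trans[OF zero_le_one \<open>1 \<le> w _\<close>] b
        \<open>summable b\<close> \<open>summable (\<lambda>n. w n * b n)\<close>]
    by (rule tendsto_mult_right_zero)
  ultimately show ?thesis
    by (rule Lim_null_comparison[OF always_eventually])
qed

lemma (in sigma_finite_subalgebra) AE_le_of_nn_cond_exp_le:
  fixes u v w :: "'a \<Rightarrow> real"
  assumes [measurable]: "u \<in> borel_measurable F" "v \<in> borel_measurable M"
    and "AE x in M. u x \<le> v x"
    and "AE x in M. 0 \<le> w x \<and> nn_cond_exp M F (\<lambda>x. ennreal (v x)) x \<le> ennreal (w x)"
  shows "AE x in M. u x \<le> w x"
proof -
  have [measurable]: "u \<in> borel_measurable M"
    by (rule measurable_from_subalg[OF subalg]) measurable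
  have "AE x in M. ennreal (u x) = nn_cond_exp M F (\<lambda>x. ennreal (u x)) x"
    by (rule nn_cond_exp_F_meas) measurable
  moreover have "AE x in M. nn_cond_exp M F (\<lambda>x. ennreal (u x)) x \<le> nn_cond_exp M F (\<lambda>x. ennreal (v x)) x"
    using assms(3) by (intro nn_cond_exp_mono) (auto elim: AE_mp intro: ennreal_leI)
  ultimately show ?thesis
    using assms(4)
  proof eventually_elim
    case (elim x)
    then have "0 \<le> w x" by simp
    from elim have "ennreal (u x) \<le> ennreal (w x)" by (metis order.trans)
    with \<open>0 \<le> w x\<close> show "u x \<le> w x" by simp
  qed
qed

theorem theorem5:
  fixes M :: "'a measure" and F :: "nat \<Rightarrow> 'a measure"
    and z a x y b c :: "nat \<Rightarrow> 'a \<Rightarrow> real" and B \<eta> :: real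
  assumes prob: "prob_space M"
    and filt: "filtration (space M) F"
    and sub: "\<And>n. subalgebra M (F n)"
    and adapted: "\<And>n. z n \<in> borel_measurable (F n)" "\<And>n. a n \<in> borel_measurable (F n)"
      "\<And>n. x n \<in> borel_measurable (F n)" "\<And>n. y n \<in> borel_measurable (F n)"
      "\<And>n. b n \<in> borel_measurable (F n)" "\<And>n. c n \<in> borel_measurable (F n)"
    and nonneg: "\<And>n \<omega>. \<omega> \<in> space M \<Longrightarrow>
        0 \<le> z n \<omega> \<and> 0 \<le> a n \<omega> \<and> 0 \<le> x n \<omega> \<and> 0 \<le> y n \<omega> \<and> 0 \<le> b n \<omega> \<and> 0 \<le> c n \<omega>"
    and RS: "\<And>n. AE \<omega> in M.
        0 \<le> (1 + a n \<omega>) * z n \<omega> + x n \<omega> - y n \<omega> \<and>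
        nn_cond_exp M (F n) (\<lambda>\<omega>. ennreal (z (Suc n) \<omega>)) \<omega>
          \<le> ennreal ((1 + a n \<omega>) * z n \<omega> + x n \<omega> - y n \<omega>)"
    and sum_a: "AE \<omega> in M. summable (\<lambda>n. a n \<omega>)"
    and incr: "\<And>n. AE \<omega> in M. \<bar>z (Suc n) \<omega> - z n \<omega>\<bar> \<le> b n \<omega> * (z n \<omega> + 1)"
    and sum_b2: "AE \<omega> in M. summable (\<lambda>n. (b n \<omega>)\<^sup>2)"
    and B: "B \<ge> 0"
    and drift: "\<And>n. AE \<omega> in M. z n \<omega> > B \<longrightarrow> x n \<omega> - y n \<omega> \<le> - c n \<omega> * (z n \<omega> - B)"
    and sum_c: "AE \<omega> in M. \<not> summable (\<lambda>n. c n \<omega>)"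
    and eta: "\<eta> > 0"
    and A1: "AE \<omega> in M. liminf (\<lambda>n. ereal (real n * c n \<omega>)) > ereal (\<eta> / 2)"
    and A2: "AE \<omega> in M. summable (\<lambda>n. (real n + 1) powr \<eta> * ((a n \<omega>)\<^sup>2 + b n \<omega>))"
  shows "AE \<omega> in M. (\<lambda>n. real n powr (\<eta> / 2) * dist_set (z n \<omega>) {0..B}) \<longlonglongrightarrow> 0"
proof -
  interpret prob_space M by (rule prob)
  have sandwich: "AE \<omega> in M. z n \<omega> - b n \<omega> * (z n \<omega> + 1) \<le> (1 + a n \<omega>) * z n \<omega> + x n \<omega> - y n \<omega>" for n
  proof -
    interpret finite_measure_subalgebra M "F n" by unfold_locales (rule sub)
    have [measurable]: "z n \<in> borel_measurable (F n)" "b n \<in> borel_measurable (F n)"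
      "z (Suc n) \<in> borel_measurable M"
      using adapted(1,5) measurable_from_subalg[OF sub adapted(1)] by auto
    have lower: "AE \<omega> in M. z n \<omega> - b n \<omega> * (z n \<omega> + 1) \<le> z (Suc n) \<omega>"
      using incr[of n] by eventually_elim (simp add: abs_le_iff)
    show ?thesis
      by (rule AE_le_of_nn_cond_exp_le[OF _ _ lower RS[of n]]) measurable
  qed
  have "AE \<omega> in M. z n \<omega> > B \<longrightarrow> c n \<omega> * (z n \<omega> - B) \<le> a n \<omega> * z n \<omega> + b n \<omega> * (z n \<omega> + 1)" for n
    using sandwich[of n] drift[of n] by eventually_elim (auto simp: algebra_simps)
  then have "AE \<omega> in M. \<forall>n. z n \<omega> > B \<longrightarrow> c n \<omega> * (z n \<omega> - B) \<le> a n \<omega> * z n \<omega> + b n \<omega> * (z n \<omega> + 1)"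
    by (simp add: AE_all_countable)
  moreover have "AE \<omega> in M. \<forall>n. \<bar>z (Suc n) \<omega> - z n \<omega>\<bar> \<le> b n \<omega> * (z n \<omega> + 1)"
    using incr by (simp add: AE_all_countable)
  ultimately show ?thesis
    using sum_a sum_c A2 AE_space
  proof eventually_elim
    case (elim \<omega>)
    have "norm ((real n + 1) powr \<eta> * b n \<omega>) \<le> (real n + 1) powr \<eta> * ((a n \<omega>)\<^sup>2 + b n \<omega>)" for n
      using nonneg[OF elim(6), of n] by (simp add: mult_left_mono)
    then have "summable (\<lambda>n. (real n + 1) powr \<eta> * b n \<omega>)"
      by (rule summable_comparison_test'[OF elim(5)])
    with elim nonneg eta show ?case
      by (intro powr_dist_interval_tendsto_zero[where a = "\<lambda>n. a n \<omega>" and b = "\<lambda>n. b n \<omega>" and c = "\<lambda>n. c n \<omega>"]) auto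
  qed
qed

end
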